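(* Let $(C\otimes V,\delta_{C\otimes V})$ be a weak crossed coproduct with precounit $\upsilon$ and associated morphisms $\chi_V^C,\tau_V^C$, let $D$ be a coalgebra, and let $p_C:D\rightarrow C$ be a coalgebra morphism and $p_V:D\rightarrow V$ a morphism. The following are equivalent. (i) There exists a unique coalgebra morphism $\varpi:D\rightarrow C\Box V$ such that $\gamma_\upsilon\circ i_{C\otimes V}\circ\varpi=p_C$ and $(\varepsilon_C\otimes V)\circ i_{C\otimes V}\circ\varpi=p_V$. (ii) $\upsilon\circ(p_C\otimes p_V)\circ\delta_D=\varepsilon_D$, $\chi_V^C\circ(p_C\otimes p_V)\circ\delta_D=(p_V\otimes p_C)\circ\delta_D$ and $\tau_V^C\circ(p_C\otimes p_V)\circ\delta_D=(p_V\otimes p_V)\circ\delta_D$.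
   Context: $\mathcal C$ is a strict monoidal category with tensor product $\otimes$ and unit object $K$ in which every idempotent splits (every idempotent $\Gamma$ factors as $i\circ p$ with $p\circ i$ the identity of its image). We write $C\otimes f$ for $id_C\otimes f$. A coalgebra $C$ has counit $\varepsilon_C$ and coproduct $\delta_C$. Weak crossed coproducts. Let $C$ be a coalgebra and $V$ an object, and let $\chi_V^C:C\otimes V\rightarrow V\otimes C$ satisfy $(\chi_V^C\otimes C)\circ(C\otimes\chi_V^C)\circ(\delta_C\otimes V)=(V\otimes\delta_C)\circ\chi_V^C$. Then $\Gamma_{C\otimes V}=(C\otimes V\otimes\varepsilon_C)\circ(C\otimes\chi_V^C)\circ(\delta_C\otimes V)$ is idempotent; $C\Box V$ denotes its image with injection $i_{C\otimes V}$ and projection $p_{C\otimes V}$. Let $\tau_V^C:C\otimes V\rightarrow V\otimes V$ with $\tau_V^C\circ\Gamma_{C\otimes V}=\tau_V^C$. The twisted condition is $(\tau_V^C\otimes C)\circ(C\otimes\chi_V^C)\circ(\delta_C\otimes V)=(V\otimes\chi_V^C)\circ(\chi_V^C\otimes V)\circ(C\otimes\tau_V^C)\circ(\delta_C\otimes V)$ and the cocycle condition is $(\tau_V^C\otimes V)\circ(C\otimes\tau_V^C)\circ(\delta_C\otimes V)=(V\otimes\tau_V^C)\circ(\chi_V^C\otimes V)\circ(C\otimes\tau_V^C)\circ(\delta_C\otimes V)$. Put $\delta_{C\otimes V}=(C\otimes\chi_V^C\otimes V)\circ(\delta_C\otimes\tau_V^C)\circ(\delta_C\otimes V)$. If the twisted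 and cocycle conditions hold, $(C\otimes V,\delta_{C\otimes V})$ is a weak crossed coproduct. For $\upsilon:C\otimes V\rightarrow K$ put $\gamma_\upsilon=(C\otimes\upsilon)\circ(\delta_C\otimes V)$. A weak crossed coproduct with precounit $\upsilon$ is one with $(V\otimes\upsilon)\circ(\chi_V^C\otimes V)\circ(C\otimes\tau_V^C)\circ(\delta_C\otimes V)=(\varepsilon_C\otimes V)\circ\Gamma_{C\otimes V}$, $(\upsilon\otimes V)\circ(C\otimes\tau_V^C)\circ(\delta_C\otimes V)=(\varepsilon_C\otimes V)\circ\Gamma_{C\otimes V}$ and $(\upsilon\otimes C)\circ(C\otimes\chi_V^C)\circ(\delta_C\otimes V)=\gamma_\upsilon$. Then $C\Box V$ is a coalgebra with coproduct $(p_{C\otimes V}\otimes p_{C\otimes V})\circ\delta_{C\otimes V}\circ i_{C\otimes V}$ and counit $\upsilon\circ i_{C\otimes V}$. *)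

theory Defs
  imports Main
begin

text \<open>A (small) category presented by objects of type 'o and a predicate Arr
  on a type 'm of candidate morphisms, equipped with a strict tensor product.\<close>

record ('o, 'm) moncat =
  Arr  :: "'m \<Rightarrow> bool"
  Dom  :: "'m \<Rightarrow> 'o"
  Cod  :: "'m \<Rightarrow> 'o"
  Id   :: "'o \<Rightarrow> 'm"
  Comp :: "'m \<Rightarrow> 'm \<Rightarrow> 'm"   (* Comp g f = g \<circ> f *)
  Tobj :: "'o \<Rightarrow> 'o \<Rightarrow> 'o"
  Tmor :: "'m \<Rightarrow> 'm \<Rightarrow> 'm"
  Unit :: "'o"

definition hom :: "('o, 'm) moncat \<Rightarrow> 'm \<Rightarrow> 'o \<Rightarrow> 'o \<Rightarrow> bool" where
  "hom M f A B \<longleftrightarrow> Arr M f \<and> Dom M f = A \<and> Cod M f = B"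

definition strict_monoidal_category :: "('o, 'm) moncat \<Rightarrow> bool" where
  "strict_monoidal_category M \<longleftrightarrow>
     (\<forall>A. hom M (Id M A) A A)
   \<and> (\<forall>f g A B C. hom M f A B \<longrightarrow> hom M g B C \<longrightarrow> hom M (Comp M g f) A C)
   \<and> (\<forall>f A B. hom M f A B \<longrightarrow> Comp M f (Id M A) = f \<and> Comp M (Id M B) f = f)
   \<and> (\<forall>f g h A B C D. hom M f A B \<longrightarrow> hom M g B C \<longrightarrow> hom M h C D \<longrightarrow>
         Comp M h (Comp M g f) = Comp M (Comp M h g) f)
   \<and> (\<forall>f g A B A' B'. hom M f A B \<longrightarrow> hom M g A' B' \<longrightarrow>
         hom M (Tmor M f g) (Tobj M A A') (Tobj M B B'))
   \<and> (\<forall>A B. Tmor M (Id M A) (Id M B) = Id M (Tobj M A B))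
   \<and> (\<forall>f f' g g' A B C A' B' C'. hom M f A B \<longrightarrow> hom M g B C \<longrightarrow>
         hom M f' A' B' \<longrightarrow> hom M g' B' C' \<longrightarrow>
         Tmor M (Comp M g f) (Comp M g' f') = Comp M (Tmor M g g') (Tmor M f f'))
   \<and> (\<forall>A B C. Tobj M (Tobj M A B) C = Tobj M A (Tobj M B C))
   \<and> (\<forall>f g h. Arr M f \<longrightarrow> Arr M g \<longrightarrow> Arr M h \<longrightarrow>
         Tmor M (Tmor M f g) h = Tmor M f (Tmor M g h))
   \<and> (\<forall>A. Tobj M (Unit M) A = A \<and> Tobj M A (Unit M) = A)
   \<and> (\<forall>f. Arr M f \<longrightarrow> Tmor M (Id M (Unit M)) f = f \<and> Tmor M f (Id M (Unit M)) = f)"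

definition idempotents_split :: "('o, 'm) moncat \<Rightarrow> bool" where
  "idempotents_split M \<longleftrightarrow>
     (\<forall>e A. hom M e A A \<longrightarrow> Comp M e e = e \<longrightarrow>
        (\<exists>B i p. hom M i B A \<and> hom M p A B \<and> Comp M i p = e \<and> Comp M p i = Id M B))"

definition coalgebra :: "('o, 'm) moncat \<Rightarrow> 'o \<Rightarrow> 'm \<Rightarrow> 'm \<Rightarrow> bool" where
  "coalgebra M C \<delta> \<epsilon> \<longleftrightarrow>
     hom M \<delta> C (Tobj M C C) \<and> hom M \<epsilon> C (Unit M)
   \<and> Comp M (Tmor M \<delta> (Id M C)) \<delta> = Comp M (Tmor M (Id M C) \<delta>) \<delta>
   \<and> Comp M (Tmor M \<epsilon> (Id M C)) \<delta> = Id M C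
   \<and> Comp M (Tmor M (Id M C) \<epsilon>) \<delta> = Id M C"

definition coalgebra_morphism ::
  "('o, 'm) moncat \<Rightarrow> 'o \<Rightarrow> 'm \<Rightarrow> 'm \<Rightarrow> 'o \<Rightarrow> 'm \<Rightarrow> 'm \<Rightarrow> 'm \<Rightarrow> bool" where
  "coalgebra_morphism M D \<delta>D \<epsilon>D C \<delta>C \<epsilon>C f \<longleftrightarrow>
     hom M f D C
   \<and> Comp M (Tmor M f f) \<delta>D = Comp M \<delta>C f
   \<and> Comp M \<epsilon>C f = \<epsilon>D"

definition Gamma :: "('o, 'm) moncat \<Rightarrow> 'o \<Rightarrow> 'm \<Rightarrow> 'm \<Rightarrow> 'o \<Rightarrow> 'm \<Rightarrow> 'm" where
  "Gamma M C \<delta> \<epsilon> V \<chi> =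
     Comp M (Comp M (Tmor M (Id M (Tobj M C V)) \<epsilon>) (Tmor M (Id M C) \<chi>)) (Tmor M \<delta> (Id M V))"

definition delta_CV :: "('o, 'm) moncat \<Rightarrow> 'o \<Rightarrow> 'm \<Rightarrow> 'o \<Rightarrow> 'm \<Rightarrow> 'm \<Rightarrow> 'm" where
  "delta_CV M C \<delta> V \<chi> \<tau> =
     Comp M (Comp M (Tmor M (Tmor M (Id M C) \<chi>) (Id M V)) (Tmor M \<delta> \<tau>)) (Tmor M \<delta> (Id M V))"

definition gamma_ups :: "('o, 'm) moncat \<Rightarrow> 'o \<Rightarrow> 'm \<Rightarrow> 'o \<Rightarrow> 'm \<Rightarrow> 'm" where
  "gamma_ups M C \<delta> V \<upsilon> = Comp M (Tmor M (Id M C) \<upsilon>) (Tmor M \<delta> (Id M V))"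

definition weak_crossed_coproduct_precounit ::
  "('o, 'm) moncat \<Rightarrow> 'o \<Rightarrow> 'm \<Rightarrow> 'm \<Rightarrow> 'o \<Rightarrow> 'm \<Rightarrow> 'm \<Rightarrow> 'm \<Rightarrow> bool" where
  "weak_crossed_coproduct_precounit M C \<delta> \<epsilon> V \<chi> \<tau> \<upsilon> \<longleftrightarrow>
     coalgebra M C \<delta> \<epsilon>
   \<and> hom M \<chi> (Tobj M C V) (Tobj M V C)
   \<and> hom M \<tau> (Tobj M C V) (Tobj M V V)
   \<and> hom M \<upsilon> (Tobj M C V) (Unit M)
   \<comment> \<open>compatibility of \<chi> with \<delta>_C\<close>
   \<and> Comp M (Comp M (Tmor M \<chi> (Id M C)) (Tmor M (Id M C) \<chi>)) (Tmor M \<delta> (Id M V))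
       = Comp M (Tmor M (Id M V) \<delta>) \<chi>
   \<and> Comp M \<tau> (Gamma M C \<delta> \<epsilon> V \<chi>) = \<tau>
   \<comment> \<open>twisted condition\<close>
   \<and> Comp M (Comp M (Tmor M \<tau> (Id M C)) (Tmor M (Id M C) \<chi>)) (Tmor M \<delta> (Id M V))
       = Comp M (Comp M (Comp M (Tmor M (Id M V) \<chi>) (Tmor M \<chi> (Id M V)))
                    (Tmor M (Id M C) \<tau>)) (Tmor M \<delta> (Id M V))
   \<comment> \<open>cocycle condition\<close>
   \<and> Comp M (Comp M (Tmor M \<tau> (Id M V)) (Tmor M (Id M C) \<tau>)) (Tmor M \<delta> (Id M V))
       = Comp M (Comp M (Comp M (Tmor M (Id M V) \<tau>) (Tmor M \<chi> (Id M V)))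
                    (Tmor M (Id M C) \<tau>)) (Tmor M \<delta> (Id M V))
   \<comment> \<open>precounit conditions\<close>
   \<and> Comp M (Comp M (Comp M (Tmor M (Id M V) \<upsilon>) (Tmor M \<chi> (Id M V)))
                    (Tmor M (Id M C) \<tau>)) (Tmor M \<delta> (Id M V))
       = Comp M (Tmor M \<epsilon> (Id M V)) (Gamma M C \<delta> \<epsilon> V \<chi>)
   \<and> Comp M (Comp M (Tmor M \<upsilon> (Id M V)) (Tmor M (Id M C) \<tau>)) (Tmor M \<delta> (Id M V))
       = Comp M (Tmor M \<epsilon> (Id M V)) (Gamma M C \<delta> \<epsilon> V \<chi>)
   \<and> Comp M (Comp M (Tmor M \<upsilon> (Id M C)) (Tmor M (Id M C) \<chi>)) (Tmor M \<delta> (Id M V))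
       = gamma_ups M C \<delta> V \<upsilon>"

end

theory Submission
  imports Defs
begin

text \<open>
  Write \<open>\<Delta>\<close> for \<open>\<delta>\<^bsub>C\<otimes>V\<^esub>\<close> and \<open>\<nu> = (\<epsilon>\<^sub>C \<otimes> V) \<circ> \<Gamma> = (V \<otimes> \<epsilon>\<^sub>C) \<circ> \<chi>\<close>. The morphisms \<open>\<Gamma>\<close>, \<open>\<chi>\<close>
  and \<open>\<tau>\<close> can all be read off from \<open>\<Delta>\<close>: \<open>\<Gamma> = (\<gamma>\<^sub>\<upsilon> \<otimes> \<nu>) \<circ> \<Delta>\<close>, \<open>\<chi> = (\<nu> \<otimes> \<gamma>\<^sub>\<upsilon>) \<circ> \<Delta>\<close> and
  \<open>\<tau> = (\<nu> \<otimes> \<nu>) \<circ> \<Delta>\<close>. For a coalgebra morphism \<open>\<varpi>\<close> with the two prescribed components,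
  \<open>i \<circ> \<varpi> = \<Gamma> \<circ> i \<circ> \<varpi>\<close> is therefore forced to be the pairing \<open>(p\<^sub>C \<otimes> p\<^sub>V) \<circ> \<delta>\<^sub>D\<close>, and
  applying \<open>\<upsilon>\<close>, \<open>\<chi>\<close>, \<open>\<tau>\<close> to it gives (ii). Conversely, under (ii) the pairing is fixed by \<open>\<Gamma>\<close>
  and carries \<open>\<delta>\<^sub>D\<close> to \<open>\<Delta>\<close>, so \<open>p \<circ> (p\<^sub>C \<otimes> p\<^sub>V) \<circ> \<delta>\<^sub>D\<close> is the required morphism, unique by
  the first argument.
\<close>

locale strict_monoidal =
  fixes M :: "('o, 'm) moncat"
  assumes smc: "strict_monoidal_category M"
begin

abbreviation comp (infixr "\<cdot>" 55) where "g \<cdot> f \<equiv> Comp M g f"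
abbreviation tensor (infixr "\<otimes>" 60) where "f \<otimes> g \<equiv> Tmor M f g"
abbreviation tensor_obj (infixr "\<odot>" 65) where "A \<odot> B \<equiv> Tobj M A B"
abbreviation idm ("\<one>") where "\<one> \<equiv> Id M"
abbreviation arr where "arr \<equiv> Arr M"
abbreviation dom where "dom \<equiv> Dom M"
abbreviation cod where "cod \<equiv> Cod M"
abbreviation K where "K \<equiv> Unit M"

lemma arr_Id [simp]: "arr (\<one> A)"
  and dom_Id [simp]: "dom (\<one> A) = A"
  and cod_Id [simp]: "cod (\<one> A) = A"
  using smc by (simp_all add: strict_monoidal_category_def hom_def)

lemma arr_comp [simp]: "arr f \<Longrightarrow> arr g \<Longrightarrow> dom g = cod f \<Longrightarrow> arr (g \<cdot> f)"
  and dom_comp [simp]: "arr f \<Longrightarrow> arr g \<Longrightarrow> dom g = cod f \<Longrightarrow> dom (g \<cdot> f) = dom f"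
  and cod_comp [simp]: "arr f \<Longrightarrow> arr g \<Longrightarrow> dom g = cod f \<Longrightarrow> cod (g \<cdot> f) = cod g"
  using smc unfolding strict_monoidal_category_def hom_def by metis+

lemma arr_tensor [simp]: "arr f \<Longrightarrow> arr g \<Longrightarrow> arr (f \<otimes> g)"
  and dom_tensor [simp]: "arr f \<Longrightarrow> arr g \<Longrightarrow> dom (f \<otimes> g) = dom f \<odot> dom g"
  and cod_tensor [simp]: "arr f \<Longrightarrow> arr g \<Longrightarrow> cod (f \<otimes> g) = cod f \<odot> cod g"
  using smc unfolding strict_monoidal_category_def hom_def by metis+

lemma tensor_obj_assoc [simp]: "(A \<odot> B) \<odot> C = A \<odot> (B \<odot> C)"
  and tensor_obj_unit_left [simp]: "K \<odot> A = A"
  and tensor_obj_unit_right [simp]: "A \<odot> K = A"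
  using smc by (simp_all add: strict_monoidal_category_def)

lemma comp_assoc [simp]:
  "arr f \<Longrightarrow> arr g \<Longrightarrow> arr h \<Longrightarrow> dom g = cod f \<Longrightarrow> dom h = cod g \<Longrightarrow>
    (h \<cdot> g) \<cdot> f = h \<cdot> (g \<cdot> f)"
  using smc unfolding strict_monoidal_category_def hom_def by metis

lemma comp_Id_left [simp]: "arr f \<Longrightarrow> cod f = B \<Longrightarrow> \<one> B \<cdot> f = f"
  and comp_Id_right [simp]: "arr f \<Longrightarrow> dom f = A \<Longrightarrow> f \<cdot> \<one> A = f"
  using smc unfolding strict_monoidal_category_def hom_def by metis+

lemma tensor_Id_Id [simp]: "\<one> A \<otimes> \<one> B = \<one> (A \<odot> B)"
  using smc by (simp add: strict_monoidal_category_def)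

lemma interchange:
  "arr f \<Longrightarrow> arr g \<Longrightarrow> dom g = cod f \<Longrightarrow> arr f' \<Longrightarrow> arr g' \<Longrightarrow> dom g' = cod f' \<Longrightarrow>
    (g \<cdot> f) \<otimes> (g' \<cdot> f') = (g \<otimes> g') \<cdot> (f \<otimes> f')"
  using smc unfolding strict_monoidal_category_def hom_def by metis

lemma tensor_assoc [simp]: "arr f \<Longrightarrow> arr g \<Longrightarrow> arr h \<Longrightarrow> (f \<otimes> g) \<otimes> h = f \<otimes> (g \<otimes> h)"
  using smc by (simp add: strict_monoidal_category_def)

lemma tensor_unit_left [simp]: "arr f \<Longrightarrow> \<one> K \<otimes> f = f"
  and tensor_unit_right [simp]: "arr f \<Longrightarrow> f \<otimes> \<one> K = f"
  using smc by (simp_all add: strict_monoidal_category_def)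

lemma Id_tensor_Id_tensor [simp]: "arr h \<Longrightarrow> \<one> A \<otimes> (\<one> B \<otimes> h) = \<one> (A \<odot> B) \<otimes> h"
  by (metis arr_Id tensor_assoc tensor_Id_Id)

lemma Id_tensor_comp [simp]:
  "arr f \<Longrightarrow> arr g \<Longrightarrow> dom g = cod f \<Longrightarrow> \<one> X \<otimes> (g \<cdot> f) = (\<one> X \<otimes> g) \<cdot> (\<one> X \<otimes> f)"
  using interchange[of "\<one> X" "\<one> X" f g] by simp

lemma comp_tensor_Id [simp]:
  "arr f \<Longrightarrow> arr g \<Longrightarrow> dom g = cod f \<Longrightarrow> (g \<cdot> f) \<otimes> \<one> X = (g \<otimes> \<one> X) \<cdot> (f \<otimes> \<one> X)"
  using interchange[of f g "\<one> X" "\<one> X"] by simp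

lemma tensor_factor_right_first: "arr f \<Longrightarrow> arr g \<Longrightarrow> f \<otimes> g = (f \<otimes> \<one> (cod g)) \<cdot> (\<one> (dom f) \<otimes> g)"
  using interchange[of "\<one> (dom f)" f g "\<one> (cod g)"] by simp

lemma tensor_factor_left_first: "arr f \<Longrightarrow> arr g \<Longrightarrow> f \<otimes> g = (\<one> (cod f) \<otimes> g) \<cdot> (f \<otimes> \<one> (dom g))"
  using interchange[of f "\<one> (cod f)" "\<one> (dom g)" g] by simp

lemma tensor_slide:
  "arr f \<Longrightarrow> arr g \<Longrightarrow>
    (\<one> (cod f) \<otimes> g) \<cdot> (f \<otimes> \<one> (dom g)) = (f \<otimes> \<one> (cod g)) \<cdot> (\<one> (dom f) \<otimes> g)"
  using tensor_factor_right_first tensor_factor_left_first by metis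

lemma whisker_eq: "P = Q \<Longrightarrow> \<one> X \<otimes> P \<otimes> \<one> Y = \<one> X \<otimes> Q \<otimes> \<one> Y"
  by simp

abbreviation whisker where "whisker X f Y \<equiv> \<one> X \<otimes> f \<otimes> \<one> Y"

lemma comp_prefix2:
  "a \<cdot> b = z \<Longrightarrow> arr a \<Longrightarrow> arr b \<Longrightarrow> dom a = cod b \<Longrightarrow> arr r \<Longrightarrow> cod r = dom b \<Longrightarrow>
    a \<cdot> (b \<cdot> r) = z \<cdot> r"
  by (simp flip: comp_assoc)

lemma comp_prefix3:
  "a \<cdot> (b \<cdot> c) = z \<Longrightarrow> arr a \<Longrightarrow> arr b \<Longrightarrow> arr c \<Longrightarrow> dom a = cod b \<Longrightarrow> dom b = cod c \<Longrightarrow>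
    arr r \<Longrightarrow> cod r = dom c \<Longrightarrow> a \<cdot> (b \<cdot> (c \<cdot> r)) = z \<cdot> r"
  by (drule sym) simp

lemma comp_prefix4:
  "a \<cdot> (b \<cdot> (c \<cdot> d)) = z \<Longrightarrow> arr a \<Longrightarrow> arr b \<Longrightarrow> arr c \<Longrightarrow> arr d \<Longrightarrow>
    dom a = cod b \<Longrightarrow> dom b = cod c \<Longrightarrow> dom c = cod d \<Longrightarrow> arr r \<Longrightarrow> cod r = dom d \<Longrightarrow>
    a \<cdot> (b \<cdot> (c \<cdot> (d \<cdot> r))) = z \<cdot> r"
  by (drule sym) simp

end

locale weak_crossed_coproduct = strict_monoidal M for M :: "('o, 'm) moncat" +
  fixes C V :: 'o and \<delta> \<epsilon> \<chi> \<tau> \<upsilon> :: 'm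
  assumes wcc: "weak_crossed_coproduct_precounit M C \<delta> \<epsilon> V \<chi> \<tau> \<upsilon>"
begin

abbreviation \<Gamma> where "\<Gamma> \<equiv> Gamma M C \<delta> \<epsilon> V \<chi>"
abbreviation \<gamma> where "\<gamma> \<equiv> gamma_ups M C \<delta> V \<upsilon>"
abbreviation \<Delta> where "\<Delta> \<equiv> delta_CV M C \<delta> V \<chi> \<tau>"
abbreviation \<nu> where "\<nu> \<equiv> (\<one> V \<otimes> \<epsilon>) \<cdot> \<chi>"

lemma wcc_types [simp]:
  "arr \<delta>" "dom \<delta> = C" "cod \<delta> = C \<odot> C" "arr \<epsilon>" "dom \<epsilon> = C" "cod \<epsilon> = K"
  "arr \<chi>" "dom \<chi> = C \<odot> V" "cod \<chi> = V \<odot> C" "arr \<tau>" "dom \<tau> = C \<odot> V" "cod \<tau> = V \<odot> V"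
  "arr \<upsilon>" "dom \<upsilon> = C \<odot> V" "cod \<upsilon> = K"
  using wcc by (auto simp: weak_crossed_coproduct_precounit_def coalgebra_def hom_def)

lemma Gamma_eq: "\<Gamma> = (\<one> (C \<odot> V) \<otimes> \<epsilon>) \<cdot> (\<one> C \<otimes> \<chi>) \<cdot> (\<delta> \<otimes> \<one> V)"
  by (simp add: Gamma_def)

lemma gamma_eq: "\<gamma> = (\<one> C \<otimes> \<upsilon>) \<cdot> (\<delta> \<otimes> \<one> V)"
  by (simp add: gamma_ups_def)

lemma delta_CV_eq: "\<Delta> = (\<one> C \<otimes> \<chi> \<otimes> \<one> V) \<cdot> (\<delta> \<otimes> \<tau>) \<cdot> (\<delta> \<otimes> \<one> V)"
  by (simp add: delta_CV_def)

lemma Gamma_types [simp]: "arr \<Gamma>" "dom \<Gamma> = C \<odot> V" "cod \<Gamma> = C \<odot> V"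
  by (simp_all add: Gamma_eq)

lemma gamma_types [simp]: "arr \<gamma>" "dom \<gamma> = C \<odot> V" "cod \<gamma> = C"
  by (simp_all add: gamma_eq)

lemma delta_CV_types [simp]: "arr \<Delta>" "dom \<Delta> = C \<odot> V" "cod \<Delta> = C \<odot> V \<odot> C \<odot> V"
  by (simp_all add: delta_CV_eq)

lemma coassoc: "(\<delta> \<otimes> \<one> C) \<cdot> \<delta> = (\<one> C \<otimes> \<delta>) \<cdot> \<delta>"
  and counit_left: "(\<epsilon> \<otimes> \<one> C) \<cdot> \<delta> = \<one> C"
  and counit_right: "(\<one> C \<otimes> \<epsilon>) \<cdot> \<delta> = \<one> C"
  using wcc by (auto simp: weak_crossed_coproduct_precounit_def coalgebra_def)

lemma chi_comult: "(\<chi> \<otimes> \<one> C) \<cdot> (\<one> C \<otimes> \<chi>) \<cdot> (\<delta> \<otimes> \<one> V) = (\<one> V \<otimes> \<delta>) \<cdot> \<chi>"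
  and tau_Gamma: "\<tau> \<cdot> \<Gamma> = \<tau>"
  and twisted: "(\<tau> \<otimes> \<one> C) \<cdot> (\<one> C \<otimes> \<chi>) \<cdot> (\<delta> \<otimes> \<one> V)
      = (\<one> V \<otimes> \<chi>) \<cdot> (\<chi> \<otimes> \<one> V) \<cdot> (\<one> C \<otimes> \<tau>) \<cdot> (\<delta> \<otimes> \<one> V)"
  and precounit_chi_tau:
    "(\<one> V \<otimes> \<upsilon>) \<cdot> (\<chi> \<otimes> \<one> V) \<cdot> (\<one> C \<otimes> \<tau>) \<cdot> (\<delta> \<otimes> \<one> V) = (\<epsilon> \<otimes> \<one> V) \<cdot> \<Gamma>"
  and precounit_tau: "(\<upsilon> \<otimes> \<one> V) \<cdot> (\<one> C \<otimes> \<tau>) \<cdot> (\<delta> \<otimes> \<one> V) = (\<epsilon> \<otimes> \<one> V) \<cdot> \<Gamma>"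
  and precounit_chi: "(\<upsilon> \<otimes> \<one> C) \<cdot> (\<one> C \<otimes> \<chi>) \<cdot> (\<delta> \<otimes> \<one> V) = \<gamma>"
  using wcc unfolding weak_crossed_coproduct_precounit_def
  by (simp_all del: comp_assoc add: comp_assoc[symmetric])

lemma upsilon_Gamma: "\<upsilon> \<cdot> \<Gamma> = \<upsilon>"
proof -
  have "\<upsilon> \<cdot> \<Gamma> = (\<upsilon> \<otimes> \<epsilon>) \<cdot> (\<one> C \<otimes> \<chi>) \<cdot> (\<delta> \<otimes> \<one> V)"
    by (simp add: Gamma_eq tensor_factor_right_first[of \<upsilon> \<epsilon>])
  also have "\<dots> = \<epsilon> \<cdot> ((\<upsilon> \<otimes> \<one> C) \<cdot> (\<one> C \<otimes> \<chi>) \<cdot> (\<delta> \<otimes> \<one> V))"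
    by (simp add: tensor_factor_left_first[of \<upsilon> \<epsilon>])
  also have "\<dots> = \<epsilon> \<cdot> ((\<one> C \<otimes> \<upsilon>) \<cdot> (\<delta> \<otimes> \<one> V))"
    by (simp only: precounit_chi gamma_eq)
  also have "\<dots> = (\<epsilon> \<otimes> \<upsilon>) \<cdot> (\<delta> \<otimes> \<one> V)"
    by (simp add: tensor_factor_right_first[of \<epsilon> \<upsilon>])
  also have "\<dots> = \<upsilon> \<cdot> (((\<epsilon> \<otimes> \<one> C) \<cdot> \<delta>) \<otimes> \<one> V)"
    by (simp add: tensor_factor_left_first[of \<epsilon> \<upsilon>])
  also have "\<dots> = \<upsilon>"
    by (simp add: counit_left)
  finally show ?thesis .
qed

lemma chi_Gamma: "\<chi> \<cdot> \<Gamma> = \<chi>"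
proof -
  have "\<chi> \<cdot> \<Gamma> = (\<chi> \<otimes> \<epsilon>) \<cdot> (\<one> C \<otimes> \<chi>) \<cdot> (\<delta> \<otimes> \<one> V)"
    by (simp add: Gamma_eq tensor_factor_right_first[of \<chi> \<epsilon>])
  also have "\<dots> = (\<one> (V \<odot> C) \<otimes> \<epsilon>) \<cdot> ((\<chi> \<otimes> \<one> C) \<cdot> (\<one> C \<otimes> \<chi>) \<cdot> (\<delta> \<otimes> \<one> V))"
    by (simp add: tensor_factor_left_first[of \<chi> \<epsilon>])
  also have "\<dots> = (\<one> (V \<odot> C) \<otimes> \<epsilon>) \<cdot> ((\<one> V \<otimes> \<delta>) \<cdot> \<chi>)"
    by (simp only: chi_comult)
  also have "\<dots> = (\<one> V \<otimes> ((\<one> C \<otimes> \<epsilon>) \<cdot> \<delta>)) \<cdot> \<chi>"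
    by simp
  also have "\<dots> = \<chi>"
    by (simp add: counit_right)
  finally show ?thesis .
qed

lemma counit_tensor_Id_Gamma: "(\<epsilon> \<otimes> \<one> V) \<cdot> \<Gamma> = \<nu>"
proof -
  have "(\<epsilon> \<otimes> \<one> V) \<cdot> \<Gamma> = (\<epsilon> \<otimes> (\<one> V \<otimes> \<epsilon>)) \<cdot> (\<one> C \<otimes> \<chi>) \<cdot> (\<delta> \<otimes> \<one> V)"
    by (simp add: Gamma_eq tensor_factor_right_first[of \<epsilon> "\<one> V \<otimes> \<epsilon>"])
  also have "\<dots> = (\<one> V \<otimes> \<epsilon>) \<cdot> (\<epsilon> \<otimes> \<chi>) \<cdot> (\<delta> \<otimes> \<one> V)"
    by (simp add: tensor_factor_left_first[of \<epsilon> "\<one> V \<otimes> \<epsilon>"] tensor_factor_right_first[of \<epsilon> \<chi>])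
  also have "\<dots> = \<nu> \<cdot> (((\<epsilon> \<otimes> \<one> C) \<cdot> \<delta>) \<otimes> \<one> V)"
    by (simp add: tensor_factor_left_first[of \<epsilon> \<chi>])
  also have "\<dots> = \<nu>"
    by (simp add: counit_left)
  finally show ?thesis .
qed

lemma gamma_Gamma: "\<gamma> \<cdot> \<Gamma> = \<gamma>"
proof -
  have "\<gamma> \<cdot> \<Gamma> = (\<one> C \<otimes> \<upsilon>) \<cdot> (\<delta> \<otimes> (\<one> V \<otimes> \<epsilon>)) \<cdot> (\<one> C \<otimes> \<chi>) \<cdot> (\<delta> \<otimes> \<one> V)"
    by (simp add: gamma_eq Gamma_eq tensor_factor_right_first[of \<delta> "\<one> V \<otimes> \<epsilon>"])
  also have "\<dots> = (\<one> C \<otimes> \<upsilon>) \<cdot> (\<one> (C \<odot> C \<odot> V) \<otimes> \<epsilon>) \<cdot> (\<delta> \<otimes> \<chi>) \<cdot> (\<delta> \<otimes> \<one> V)"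
    by (simp add: tensor_factor_left_first[of \<delta> "\<one> V \<otimes> \<epsilon>"] tensor_factor_right_first[of \<delta> \<chi>])
  also have "\<dots> = (\<one> C \<otimes> \<upsilon>) \<cdot> (\<one> (C \<odot> C \<odot> V) \<otimes> \<epsilon>) \<cdot> (\<one> (C \<odot> C) \<otimes> \<chi>) \<cdot> (((\<delta> \<otimes> \<one> C) \<cdot> \<delta>) \<otimes> \<one> V)"
    by (simp add: tensor_factor_left_first[of \<delta> \<chi>])
  also have "\<dots> = (\<one> C \<otimes> \<upsilon>) \<cdot> (\<one> (C \<odot> C \<odot> V) \<otimes> \<epsilon>) \<cdot> (\<one> (C \<odot> C) \<otimes> \<chi>) \<cdot> (((\<one> C \<otimes> \<delta>) \<cdot> \<delta>) \<otimes> \<one> V)"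
    by (simp only: coassoc)
  also have "\<dots> = (\<one> C \<otimes> (\<upsilon> \<cdot> \<Gamma>)) \<cdot> (\<delta> \<otimes> \<one> V)"
    by (simp add: Gamma_eq)
  also have "\<dots> = \<gamma>"
    by (simp add: upsilon_Gamma gamma_eq)
  finally show ?thesis .
qed

lemma nu_Gamma: "\<nu> \<cdot> \<Gamma> = \<nu>"
  by (simp add: chi_Gamma)

lemma comult_tensor_tau: "(\<one> (C \<odot> C) \<otimes> \<tau>) \<cdot> (\<delta> \<otimes> \<one> (C \<odot> V)) = (\<delta> \<otimes> \<one> (V \<odot> V)) \<cdot> (\<one> C \<otimes> \<tau>)"
  using tensor_slide[of \<delta> \<tau>] by simp

lemma comult_twice_tensor_Id:
  "(\<delta> \<otimes> \<one> (C \<odot> V)) \<cdot> (\<delta> \<otimes> \<one> V) = (\<one> C \<otimes> \<delta> \<otimes> \<one> V) \<cdot> (\<delta> \<otimes> \<one> V)"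
  using whisker_eq[OF coassoc, of K V] by simp

lemma counit_chi_comult:
  "(\<one> V \<otimes> \<epsilon> \<otimes> \<one> (C \<odot> V)) \<cdot> (\<chi> \<otimes> \<one> (C \<odot> V)) \<cdot> (\<one> C \<otimes> \<chi> \<otimes> \<one> V) \<cdot> (\<delta> \<otimes> \<one> (V \<odot> V))
    = \<chi> \<otimes> \<one> V"
proof -
  have "(\<one> V \<otimes> \<epsilon> \<otimes> \<one> C) \<cdot> ((\<chi> \<otimes> \<one> C) \<cdot> (\<one> C \<otimes> \<chi>) \<cdot> (\<delta> \<otimes> \<one> V))
      = (\<one> V \<otimes> ((\<epsilon> \<otimes> \<one> C) \<cdot> \<delta>)) \<cdot> \<chi>"
    by (simp only: chi_comult) simp
  then have "(\<one> V \<otimes> \<epsilon> \<otimes> \<one> C) \<cdot> (\<chi> \<otimes> \<one> C) \<cdot> (\<one> C \<otimes> \<chi>) \<cdot> (\<delta> \<otimes> \<one> V) = \<chi>"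
    by (simp add: counit_left)
  from whisker_eq[OF this, of K V] show ?thesis by simp
qed

abbreviation \<Delta>\<^sub>0 where "\<Delta>\<^sub>0 \<equiv> (\<chi> \<otimes> \<one> V) \<cdot> (\<one> C \<otimes> \<tau>) \<cdot> (\<delta> \<otimes> \<one> V)"

lemma delta_CV_factor: "\<Delta> = (\<one> C \<otimes> \<Delta>\<^sub>0) \<cdot> (\<delta> \<otimes> \<one> V)"
  by (simp add: delta_CV_eq tensor_factor_right_first[of \<delta> \<tau>]
      comult_tensor_tau[symmetric, THEN comp_prefix2] comult_twice_tensor_Id)

lemma gamma_tensor_Id_delta_CV: "(\<gamma> \<otimes> \<one> (C \<odot> V)) \<cdot> \<Delta> = (\<one> C \<otimes> \<Gamma>) \<cdot> (\<delta> \<otimes> \<one> V)"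
proof -
  have slide_chi: "(\<delta> \<otimes> \<one> (V \<odot> C \<odot> V)) \<cdot> (\<one> C \<otimes> \<chi> \<otimes> \<one> V)
      = (\<one> (C \<odot> C) \<otimes> \<chi> \<otimes> \<one> V) \<cdot> (\<delta> \<otimes> \<one> (C \<odot> V \<odot> V))"
    using tensor_slide[of \<delta> "\<chi> \<otimes> \<one> V"] by simp
  have slide_tau: "(\<delta> \<otimes> \<one> (C \<odot> V \<odot> V)) \<cdot> (\<one> (C \<odot> C) \<otimes> \<tau>)
      = (\<one> (C \<odot> C \<odot> C) \<otimes> \<tau>) \<cdot> (\<delta> \<otimes> \<one> (C \<odot> C \<odot> V))"
    using tensor_slide[of \<delta> "\<one> C \<otimes> \<tau>"] by simp
  have coassoc_CV: "(\<delta> \<otimes> \<one> (C \<odot> C \<odot> V)) \<cdot> (\<delta> \<otimes> \<one> (C \<odot> V))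
      = (\<one> C \<otimes> \<delta> \<otimes> \<one> (C \<odot> V)) \<cdot> (\<delta> \<otimes> \<one> (C \<odot> V))"
    using whisker_eq[OF coassoc, of K "C \<odot> V"] by simp
  have slide_comult_tau: "(\<one> (C \<odot> C \<odot> C) \<otimes> \<tau>) \<cdot> (\<one> C \<otimes> \<delta> \<otimes> \<one> (C \<odot> V))
      = (\<one> C \<otimes> \<delta> \<otimes> \<one> (V \<odot> V)) \<cdot> (\<one> (C \<odot> C) \<otimes> \<tau>)"
    using whisker_eq[OF comult_tensor_tau, of C K] by simp
  have precounit_chi': "(\<one> C \<otimes> \<upsilon> \<otimes> \<one> (C \<odot> V)) \<cdot> (\<one> (C \<odot> C) \<otimes> \<chi> \<otimes> \<one> V) \<cdot> (\<one> C \<otimes> \<delta> \<otimes> \<one> (V \<odot> V))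
      = (\<one> (C \<odot> C) \<otimes> \<upsilon> \<otimes> \<one> V) \<cdot> (\<one> C \<otimes> \<delta> \<otimes> \<one> (V \<odot> V))"
    using whisker_eq[OF precounit_chi, of C V] by (simp add: gamma_eq)
  have coassoc_C_V: "(\<one> C \<otimes> \<delta> \<otimes> \<one> (C \<odot> V)) \<cdot> (\<one> C \<otimes> \<delta> \<otimes> \<one> V)
      = (\<one> (C \<odot> C) \<otimes> \<delta> \<otimes> \<one> V) \<cdot> (\<one> C \<otimes> \<delta> \<otimes> \<one> V)"
    using whisker_eq[OF coassoc, of C V] by simp
  have precounit_tau': "(\<one> (C \<odot> C) \<otimes> \<upsilon> \<otimes> \<one> V) \<cdot> (\<one> (C \<odot> C \<odot> C) \<otimes> \<tau>) \<cdot> (\<one> (C \<odot> C) \<otimes> \<delta> \<otimes> \<one> V)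
      = (\<one> (C \<odot> C \<odot> V) \<otimes> \<epsilon>) \<cdot> (\<one> (C \<odot> C) \<otimes> \<chi>)"
    using whisker_eq[OF precounit_tau, of "C \<odot> C" K] by (simp add: counit_tensor_Id_Gamma)
  have "(\<gamma> \<otimes> \<one> (C \<odot> V)) \<cdot> \<Delta> = whisker C \<upsilon> (C\<odot>V) \<cdot> whisker K \<delta> (V\<odot>C\<odot>V)
      \<cdot> whisker C \<chi> V \<cdot> whisker (C\<odot>C) \<tau> K \<cdot> whisker K \<delta> (C\<odot>V) \<cdot> whisker K \<delta> V"
    by (simp add: gamma_eq delta_CV_eq tensor_factor_left_first[of \<delta> \<tau>])
  also have "\<dots> = whisker C \<upsilon> (C\<odot>V) \<cdot> whisker (C\<odot>C) \<chi> V
      \<cdot> whisker (C\<odot>C\<odot>C) \<tau> K \<cdot> whisker K \<delta> (C\<odot>C\<odot>V) \<cdot> whisker K \<delta> (C\<odot>V) \<cdot> whisker K \<delta> V"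
    by (simp add: slide_chi[THEN comp_prefix2] slide_tau[THEN comp_prefix2])
  also have "\<dots> = whisker C \<upsilon> (C\<odot>V) \<cdot> whisker (C\<odot>C) \<chi> V
      \<cdot> whisker C \<delta> (V\<odot>V) \<cdot> whisker (C\<odot>C) \<tau> K \<cdot> whisker K \<delta> (C\<odot>V) \<cdot> whisker K \<delta> V"
    by (simp add: coassoc_CV[THEN comp_prefix2] slide_comult_tau[THEN comp_prefix2])
  also have "\<dots> = whisker (C\<odot>C) \<upsilon> V \<cdot> whisker C \<delta> (V\<odot>V)
      \<cdot> whisker (C\<odot>C) \<tau> K \<cdot> whisker K \<delta> (C\<odot>V) \<cdot> whisker K \<delta> V"
    by (simp add: precounit_chi'[THEN comp_prefix3])
  also have "\<dots> = whisker (C\<odot>C) \<upsilon> V \<cdot> whisker (C\<odot>C\<odot>C) \<tau> K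
      \<cdot> whisker C \<delta> (C\<odot>V) \<cdot> whisker K \<delta> (C\<odot>V) \<cdot> whisker K \<delta> V"
    by (simp add: slide_comult_tau[symmetric, THEN comp_prefix2])
  also have "\<dots> = whisker (C\<odot>C\<odot>V) \<epsilon> K \<cdot> whisker (C\<odot>C) \<chi> K
      \<cdot> whisker C \<delta> V \<cdot> whisker K \<delta> V"
    by (simp add: comult_twice_tensor_Id coassoc_C_V[THEN comp_prefix2] precounit_tau'[THEN comp_prefix3])
  also have "\<dots> = (\<one> C \<otimes> \<Gamma>) \<cdot> (\<delta> \<otimes> \<one> V)"
    by (simp add: Gamma_eq)
  finally show ?thesis .
qed

lemma Gamma_via_delta_CV: "(\<gamma> \<otimes> \<nu>) \<cdot> \<Delta> = \<Gamma>"
proof -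
  have "(\<gamma> \<otimes> \<nu>) \<cdot> \<Delta> = (\<one> C \<otimes> \<nu>) \<cdot> ((\<gamma> \<otimes> \<one> (C \<odot> V)) \<cdot> \<Delta>)"
    by (simp add: tensor_factor_left_first[of \<gamma> \<nu>])
  also have "\<dots> = (\<one> C \<otimes> (\<nu> \<cdot> \<Gamma>)) \<cdot> (\<delta> \<otimes> \<one> V)"
    by (simp add: gamma_tensor_Id_delta_CV)
  also have "\<dots> = (\<one> C \<otimes> \<nu>) \<cdot> (\<delta> \<otimes> \<one> V)"
    by (simp only: nu_Gamma)
  also have "\<dots> = \<Gamma>"
    by (simp add: Gamma_eq)
  finally show ?thesis .
qed

lemma chi_via_delta_CV: "(\<nu> \<otimes> \<gamma>) \<cdot> \<Delta> = \<chi>"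
proof -
  have comult_chi: "(\<one> V \<otimes> \<delta> \<otimes> \<one> V) \<cdot> (\<chi> \<otimes> \<one> V)
      = (\<chi> \<otimes> \<one> (C \<odot> V)) \<cdot> (\<one> C \<otimes> \<chi> \<otimes> \<one> V) \<cdot> (\<delta> \<otimes> \<one> (V \<odot> V))"
    using whisker_eq[OF chi_comult, of K V] by simp
  have slide_upsilon: "(\<one> (V \<odot> C) \<otimes> \<upsilon>) \<cdot> (\<chi> \<otimes> \<one> (C \<odot> V)) = \<chi> \<cdot> (\<one> (C \<odot> V) \<otimes> \<upsilon>)"
    using tensor_slide[of \<chi> \<upsilon>] by simp
  have "(\<nu> \<otimes> \<gamma>) \<cdot> \<Delta> = whisker (V\<odot>C) \<upsilon> K \<cdot> whisker V \<delta> V \<cdot> whisker V \<epsilon> (C\<odot>V) \<cdot> whisker K \<chi> (C\<odot>V)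
      \<cdot> whisker C \<chi> V \<cdot> whisker (C\<odot>C) \<tau> K \<cdot> whisker K \<delta> (C\<odot>V) \<cdot> whisker K \<delta> V"
    by (simp add: gamma_eq delta_CV_eq tensor_factor_left_first[of \<nu> "(\<one> C \<otimes> \<upsilon>) \<cdot> (\<delta> \<otimes> \<one> V)"]
        tensor_factor_left_first[of \<delta> \<tau>])
  also have "\<dots> = whisker (V\<odot>C) \<upsilon> K \<cdot> whisker V \<delta> V \<cdot> whisker K \<chi> V \<cdot> whisker C \<tau> K \<cdot> whisker K \<delta> V"
    by (simp add: comult_tensor_tau[THEN comp_prefix2] counit_chi_comult[THEN comp_prefix4])
  also have "\<dots> = \<chi> \<cdot> whisker (C\<odot>V) \<upsilon> K \<cdot> whisker C \<chi> V \<cdot> whisker (C\<odot>C) \<tau> K \<cdot> whisker K \<delta> (C\<odot>V)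
      \<cdot> whisker K \<delta> V"
    by (simp add: comult_chi[THEN comp_prefix2] slide_upsilon[THEN comp_prefix2]
        comult_tensor_tau[symmetric, THEN comp_prefix2])
  also have "\<dots> = \<chi> \<cdot> ((\<one> C \<otimes> ((\<one> V \<otimes> \<upsilon>) \<cdot> (\<chi> \<otimes> \<one> V) \<cdot> (\<one> C \<otimes> \<tau>) \<cdot> (\<delta> \<otimes> \<one> V))) \<cdot> (\<delta> \<otimes> \<one> V))"
    by (simp add: comult_twice_tensor_Id)
  also have "\<dots> = \<chi> \<cdot> ((\<one> C \<otimes> \<nu>) \<cdot> (\<delta> \<otimes> \<one> V))"
    by (simp only: precounit_chi_tau counit_tensor_Id_Gamma)
  also have "\<dots> = \<chi> \<cdot> \<Gamma>"
    by (simp add: Gamma_eq)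
  also have "\<dots> = \<chi>"
    by (simp add: chi_Gamma)
  finally show ?thesis .
qed

lemma tau_via_delta_CV: "(\<nu> \<otimes> \<nu>) \<cdot> \<Delta> = \<tau>"
proof -
  have slide_counit: "(\<one> (V \<odot> V) \<otimes> \<epsilon>) \<cdot> (\<tau> \<otimes> \<one> C) = \<tau> \<cdot> (\<one> (C \<odot> V) \<otimes> \<epsilon>)"
    using tensor_slide[of \<tau> \<epsilon>] by simp
  have "(\<nu> \<otimes> \<nu>) \<cdot> \<Delta> = whisker (V\<odot>V) \<epsilon> K \<cdot> whisker V \<chi> K \<cdot> whisker V \<epsilon> (C\<odot>V) \<cdot> whisker K \<chi> (C\<odot>V)
      \<cdot> whisker C \<chi> V \<cdot> whisker (C\<odot>C) \<tau> K \<cdot> whisker K \<delta> (C\<odot>V) \<cdot> whisker K \<delta> V"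
    by (simp add: delta_CV_eq tensor_factor_left_first[of \<nu> \<nu>] tensor_factor_left_first[of \<delta> \<tau>])
  also have "\<dots> = (\<one> (V \<odot> V) \<otimes> \<epsilon>) \<cdot> ((\<one> V \<otimes> \<chi>) \<cdot> (\<chi> \<otimes> \<one> V) \<cdot> (\<one> C \<otimes> \<tau>) \<cdot> (\<delta> \<otimes> \<one> V))"
    by (simp add: comult_tensor_tau[THEN comp_prefix2] counit_chi_comult[THEN comp_prefix4])
  also have "\<dots> = (\<one> (V \<odot> V) \<otimes> \<epsilon>) \<cdot> ((\<tau> \<otimes> \<one> C) \<cdot> (\<one> C \<otimes> \<chi>) \<cdot> (\<delta> \<otimes> \<one> V))"
    by (simp only: twisted)
  also have "\<dots> = \<tau> \<cdot> \<Gamma>"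
    by (simp add: Gamma_eq slide_counit[THEN comp_prefix2])
  also have "\<dots> = \<tau>"
    by (simp add: tau_Gamma)
  finally show ?thesis .
qed

end

locale wcc_cone = weak_crossed_coproduct M C V \<delta> \<epsilon> \<chi> \<tau> \<upsilon>
  for M :: "('o, 'm) moncat" and C V \<delta> \<epsilon> \<chi> \<tau> \<upsilon> +
  fixes D :: 'o and \<delta>D \<epsilon>D pC pV :: 'm
  assumes coalgebra_D: "coalgebra M D \<delta>D \<epsilon>D"
    and pC_coalgebra_morphism: "coalgebra_morphism M D \<delta>D \<epsilon>D C \<delta> \<epsilon> pC"
    and pV_hom: "hom M pV D V"
begin

text \<open>The pairing \<open>(pC \<otimes> pV) \<cdot> \<delta>D\<close>, in the factored form that the simplifier works with.\<close>
abbreviation pairing where "pairing \<equiv> (pC \<otimes> \<one> V) \<cdot> (\<one> D \<otimes> pV) \<cdot> \<delta>D"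

lemma cone_types [simp]:
  "arr \<delta>D" "dom \<delta>D = D" "cod \<delta>D = D \<odot> D" "arr \<epsilon>D" "dom \<epsilon>D = D" "cod \<epsilon>D = K"
  "arr pC" "dom pC = D" "cod pC = C" "arr pV" "dom pV = D" "cod pV = V"
  using coalgebra_D pC_coalgebra_morphism pV_hom
  by (auto simp: coalgebra_def coalgebra_morphism_def hom_def)

lemma coassoc_D: "(\<delta>D \<otimes> \<one> D) \<cdot> \<delta>D = (\<one> D \<otimes> \<delta>D) \<cdot> \<delta>D"
  and counit_left_D: "(\<epsilon>D \<otimes> \<one> D) \<cdot> \<delta>D = \<one> D"
  and counit_right_D: "(\<one> D \<otimes> \<epsilon>D) \<cdot> \<delta>D = \<one> D"
  using coalgebra_D by (auto simp: coalgebra_def)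

lemma pC_comult: "\<delta> \<cdot> pC = (pC \<otimes> \<one> C) \<cdot> (\<one> D \<otimes> pC) \<cdot> \<delta>D"
  using pC_coalgebra_morphism
  by (simp add: coalgebra_morphism_def tensor_factor_right_first[of pC pC])

lemma pC_counit: "\<epsilon> \<cdot> pC = \<epsilon>D"
  using pC_coalgebra_morphism by (simp add: coalgebra_morphism_def)

lemma pairing_eq: "pairing = (pC \<otimes> pV) \<cdot> \<delta>D"
  by (simp add: tensor_factor_right_first[of pC pV])

lemma Id_tensor_comult_pairing:
  assumes "arr F" "dom F = C \<odot> V"
  shows "(\<one> C \<otimes> F) \<cdot> ((\<delta> \<otimes> \<one> V) \<cdot> pairing) = (pC \<otimes> \<one> (cod F)) \<cdot> ((\<one> D \<otimes> (F \<cdot> pairing)) \<cdot> \<delta>D)"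
proof -
  have comult_pC: "(\<delta> \<otimes> \<one> V) \<cdot> (pC \<otimes> \<one> V)
      = (pC \<otimes> \<one> (C \<odot> V)) \<cdot> (\<one> D \<otimes> pC \<otimes> \<one> V) \<cdot> (\<delta>D \<otimes> \<one> V)"
    using whisker_eq[OF pC_comult, of K V] by simp
  have slide_pV: "(\<delta>D \<otimes> \<one> V) \<cdot> (\<one> D \<otimes> pV) = (\<one> (D \<odot> D) \<otimes> pV) \<cdot> (\<delta>D \<otimes> \<one> D)"
    using tensor_slide[of \<delta>D pV] by simp
  have slide_F: "(\<one> C \<otimes> F) \<cdot> (pC \<otimes> \<one> (C \<odot> V)) = (pC \<otimes> \<one> (cod F)) \<cdot> (\<one> D \<otimes> F)"
    using tensor_slide[of pC F] assms by simp
  show ?thesis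
    using assms by (simp add: comult_pC[THEN comp_prefix2] slide_pV[THEN comp_prefix2] coassoc_D
        slide_F[THEN comp_prefix2])
qed

lemma counit_tensor_Id_pairing: "(\<epsilon> \<otimes> \<one> V) \<cdot> pairing = pV"
proof -
  have slide: "(\<epsilon>D \<otimes> \<one> V) \<cdot> (\<one> D \<otimes> pV) = pV \<cdot> (\<epsilon>D \<otimes> \<one> D)"
    using tensor_slide[of \<epsilon>D pV] by simp
  have "(\<epsilon> \<otimes> \<one> V) \<cdot> pairing = ((\<epsilon> \<cdot> pC) \<otimes> \<one> V) \<cdot> (\<one> D \<otimes> pV) \<cdot> \<delta>D"
    by simp
  also have "\<dots> = pV \<cdot> ((\<epsilon>D \<otimes> \<one> D) \<cdot> \<delta>D)"
    by (simp add: pC_counit slide[THEN comp_prefix2])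
  also have "\<dots> = pV"
    by (simp add: counit_left_D)
  finally show ?thesis .
qed

end

locale wcc_compatible_cone = wcc_cone +
  assumes upsilon_pairing: "\<upsilon> \<cdot> pairing = \<epsilon>D"
    and chi_pairing: "\<chi> \<cdot> pairing = (pV \<otimes> pC) \<cdot> \<delta>D"
    and tau_pairing: "\<tau> \<cdot> pairing = (pV \<otimes> pV) \<cdot> \<delta>D"
begin

lemma gamma_pairing: "\<gamma> \<cdot> pairing = pC"
proof -
  have "\<gamma> \<cdot> pairing = (\<one> C \<otimes> \<upsilon>) \<cdot> ((\<delta> \<otimes> \<one> V) \<cdot> pairing)"
    by (simp add: gamma_eq)
  also have "\<dots> = pC \<cdot> ((\<one> D \<otimes> (\<upsilon> \<cdot> pairing)) \<cdot> \<delta>D)"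
    using Id_tensor_comult_pairing[of \<upsilon>] by simp
  also have "\<dots> = pC"
    by (simp add: upsilon_pairing counit_right_D)
  finally show ?thesis .
qed

lemma nu_pairing: "\<nu> \<cdot> pairing = pV"
proof -
  have slide: "(\<one> V \<otimes> \<epsilon>) \<cdot> (pV \<otimes> \<one> C) = pV \<cdot> (\<one> D \<otimes> \<epsilon>)"
    using tensor_slide[of pV \<epsilon>] by simp
  have "\<nu> \<cdot> pairing = (\<one> V \<otimes> \<epsilon>) \<cdot> ((pV \<otimes> \<one> C) \<cdot> (\<one> D \<otimes> pC) \<cdot> \<delta>D)"
    using chi_pairing by (simp add: tensor_factor_right_first[of pV pC])
  also have "\<dots> = pV \<cdot> ((\<one> D \<otimes> (\<epsilon> \<cdot> pC)) \<cdot> \<delta>D)"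
    by (simp add: slide[THEN comp_prefix2])
  also have "\<dots> = pV"
    by (simp add: pC_counit counit_right_D)
  finally show ?thesis .
qed

lemma Gamma_pairing: "\<Gamma> \<cdot> pairing = pairing"
proof -
  have "\<Gamma> \<cdot> pairing = (\<one> C \<otimes> \<nu>) \<cdot> ((\<delta> \<otimes> \<one> V) \<cdot> pairing)"
    by (simp add: Gamma_eq)
  also have "\<dots> = (pC \<otimes> \<one> V) \<cdot> ((\<one> D \<otimes> (\<nu> \<cdot> pairing)) \<cdot> \<delta>D)"
    using Id_tensor_comult_pairing[of \<nu>] by simp
  also have "\<dots> = pairing"
    by (simp only: nu_pairing)
  finally show ?thesis .
qed

lemma delta_CV_tail_pairing:
  "\<Delta>\<^sub>0 \<cdot> pairing = (\<one> (V \<odot> C) \<otimes> pV) \<cdot> (pV \<otimes> \<one> (C \<odot> D)) \<cdot> (\<one> D \<otimes> pC \<otimes> \<one> D) \<cdot> (\<delta>D \<otimes> \<one> D) \<cdot> \<delta>D"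
proof -
  have slide1: "(\<one> D \<otimes> pV \<otimes> \<one> V) \<cdot> (\<one> (D \<odot> D) \<otimes> pV) = (\<one> (D \<odot> V) \<otimes> pV) \<cdot> (\<one> D \<otimes> pV \<otimes> \<one> D)"
    using whisker_eq[OF tensor_slide[of pV pV], of D K] by simp
  have slide2: "(pC \<otimes> \<one> (V \<odot> V)) \<cdot> (\<one> (D \<odot> V) \<otimes> pV) = (\<one> (C \<odot> V) \<otimes> pV) \<cdot> (pC \<otimes> \<one> (V \<odot> D))"
    using tensor_slide[of pC "\<one> V \<otimes> pV"] by simp
  have slide3: "(\<chi> \<otimes> \<one> V) \<cdot> (\<one> (C \<odot> V) \<otimes> pV) = (\<one> (V \<odot> C) \<otimes> pV) \<cdot> (\<chi> \<otimes> \<one> D)"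
    using tensor_slide[of \<chi> pV] by simp
  have chi_pairing': "\<chi> \<cdot> pairing = (pV \<otimes> \<one> C) \<cdot> (\<one> D \<otimes> pC) \<cdot> \<delta>D"
    using chi_pairing by (simp add: tensor_factor_right_first[of pV pC])
  have chi_pairing_D: "(\<chi> \<otimes> \<one> D) \<cdot> (pC \<otimes> \<one> (V \<odot> D)) \<cdot> (\<one> D \<otimes> pV \<otimes> \<one> D) \<cdot> (\<delta>D \<otimes> \<one> D)
      = (pV \<otimes> \<one> (C \<odot> D)) \<cdot> (\<one> D \<otimes> pC \<otimes> \<one> D) \<cdot> (\<delta>D \<otimes> \<one> D)"
    using whisker_eq[OF chi_pairing', of K D] by simp
  have "\<Delta>\<^sub>0 \<cdot> pairing = (\<chi> \<otimes> \<one> V) \<cdot> ((\<one> C \<otimes> \<tau>) \<cdot> ((\<delta> \<otimes> \<one> V) \<cdot> pairing))"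
    by simp
  also have "\<dots> = (\<chi> \<otimes> \<one> V) \<cdot> ((pC \<otimes> \<one> (V \<odot> V)) \<cdot> ((\<one> D \<otimes> (\<tau> \<cdot> pairing)) \<cdot> \<delta>D))"
    using Id_tensor_comult_pairing[of \<tau>] by simp
  also have "\<dots> = (\<chi> \<otimes> \<one> V) \<cdot> ((pC \<otimes> \<one> (V \<odot> V)) \<cdot> ((\<one> D \<otimes> ((pV \<otimes> \<one> V) \<cdot> (\<one> D \<otimes> pV) \<cdot> \<delta>D)) \<cdot> \<delta>D))"
    by (simp add: tau_pairing tensor_factor_right_first[of pV pV])
  also have "\<dots> = (\<one> (V \<odot> C) \<otimes> pV) \<cdot> (pV \<otimes> \<one> (C \<odot> D)) \<cdot> (\<one> D \<otimes> pC \<otimes> \<one> D) \<cdot> (\<delta>D \<otimes> \<one> D) \<cdot> \<delta>D"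
    by (simp add: slide1[THEN comp_prefix2] slide2[THEN comp_prefix2] slide3[THEN comp_prefix2]
        coassoc_D[symmetric] chi_pairing_D[THEN comp_prefix4])
  finally show ?thesis .
qed

lemma delta_CV_pairing: "\<Delta> \<cdot> pairing = (pairing \<otimes> pairing) \<cdot> \<delta>D"
proof -
  have slideA: "(\<one> (D \<odot> V \<odot> C) \<otimes> pV) \<cdot> (\<one> D \<otimes> pV \<otimes> \<one> (C \<odot> D))
      = (\<one> D \<otimes> pV \<otimes> \<one> (C \<odot> V)) \<cdot> (\<one> (D \<odot> D \<odot> C) \<otimes> pV)"
    using whisker_eq[OF tensor_slide[of pV "\<one> C \<otimes> pV"], of D K] by simp
  have slideB: "(\<one> (D \<odot> D \<odot> C) \<otimes> pV) \<cdot> (\<one> (D \<odot> D) \<otimes> pC \<otimes> \<one> D)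
      = (\<one> (D \<odot> D) \<otimes> pC \<otimes> \<one> V) \<cdot> (\<one> (D \<odot> D \<odot> D) \<otimes> pV)"
    using whisker_eq[OF tensor_slide[of pC pV], of "D \<odot> D" K] by simp
  have coassoc_D': "(\<one> D \<otimes> \<delta>D \<otimes> \<one> D) \<cdot> (\<one> D \<otimes> \<delta>D) = (\<one> (D \<odot> D) \<otimes> \<delta>D) \<cdot> (\<one> D \<otimes> \<delta>D)"
    using whisker_eq[OF coassoc_D, of D K] by simp
  have slide_comult: "(\<one> (D \<odot> D) \<otimes> \<delta>D) \<cdot> (\<delta>D \<otimes> \<one> D) = (\<delta>D \<otimes> \<one> (D \<odot> D)) \<cdot> (\<one> D \<otimes> \<delta>D)"
    using tensor_slide[of \<delta>D \<delta>D] by simp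
  have slideC: "(\<one> (D \<odot> D \<odot> D) \<otimes> pV) \<cdot> (\<delta>D \<otimes> \<one> (D \<odot> D)) = (\<delta>D \<otimes> \<one> (D \<odot> V)) \<cdot> (\<one> (D \<odot> D) \<otimes> pV)"
    using tensor_slide[of \<delta>D "\<one> D \<otimes> pV"] by simp
  have slideD: "(\<one> (D \<odot> D) \<otimes> pC \<otimes> \<one> V) \<cdot> (\<delta>D \<otimes> \<one> (D \<odot> V)) = (\<delta>D \<otimes> \<one> (C \<odot> V)) \<cdot> (\<one> D \<otimes> pC \<otimes> \<one> V)"
    using tensor_slide[of \<delta>D "pC \<otimes> \<one> V"] by simp
  have "\<Delta> \<cdot> pairing = (\<one> C \<otimes> \<Delta>\<^sub>0) \<cdot> ((\<delta> \<otimes> \<one> V) \<cdot> pairing)"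
    by (simp add: delta_CV_factor)
  also have "\<dots> = (pC \<otimes> \<one> (V \<odot> C \<odot> V)) \<cdot> ((\<one> D \<otimes> (\<Delta>\<^sub>0 \<cdot> pairing)) \<cdot> \<delta>D)"
    using Id_tensor_comult_pairing[of \<Delta>\<^sub>0] by simp
  also have "\<dots> = (pC \<otimes> \<one> (V \<odot> C \<odot> V)) \<cdot> ((\<one> D \<otimes> ((\<one> (V \<odot> C) \<otimes> pV) \<cdot> (pV \<otimes> \<one> (C \<odot> D))
      \<cdot> (\<one> D \<otimes> pC \<otimes> \<one> D) \<cdot> (\<delta>D \<otimes> \<one> D) \<cdot> \<delta>D)) \<cdot> \<delta>D)"
    by (simp only: delta_CV_tail_pairing)
  also have "\<dots> = whisker K pC (V\<odot>C\<odot>V) \<cdot> whisker D pV (C\<odot>V) \<cdot> whisker (D\<odot>D) pC V \<cdot> whisker (D\<odot>D\<odot>D) pV K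
      \<cdot> whisker (D\<odot>D) \<delta>D K \<cdot> whisker D \<delta>D K \<cdot> \<delta>D"
    by (simp add: slideA[THEN comp_prefix2] slideB[THEN comp_prefix2] coassoc_D'[THEN comp_prefix2])
  also have "\<dots> = whisker K pC (V\<odot>C\<odot>V) \<cdot> whisker D pV (C\<odot>V) \<cdot> whisker (D\<odot>D) pC V \<cdot> whisker (D\<odot>D\<odot>D) pV K
      \<cdot> whisker (D\<odot>D) \<delta>D K \<cdot> whisker K \<delta>D D \<cdot> \<delta>D"
    by (simp add: coassoc_D)
  also have "\<dots> = (pairing \<otimes> pairing) \<cdot> \<delta>D"
    by (simp add: slide_comult[THEN comp_prefix2] slideC[THEN comp_prefix2] slideD[THEN comp_prefix2]
        tensor_factor_right_first[of pairing pairing])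
  finally show ?thesis .
qed

end

locale wcc_split_cone = wcc_cone M C V \<delta> \<epsilon> \<chi> \<tau> \<upsilon> D \<delta>D \<epsilon>D pC pV
  for M :: "('o, 'm) moncat" and C V \<delta> \<epsilon> \<chi> \<tau> \<upsilon> D \<delta>D \<epsilon>D pC pV +
  fixes S :: 'o and i p :: 'm
  assumes i_hom: "hom M i S (C \<odot> V)" and p_hom: "hom M p (C \<odot> V) S"
    and i_p: "i \<cdot> p = \<Gamma>" and p_i: "p \<cdot> i = \<one> S"
begin

lemma split_types [simp]:
  "arr i" "dom i = S" "cod i = C \<odot> V" "arr p" "dom p = C \<odot> V" "cod p = S"
  using i_hom p_hom by (auto simp: hom_def)

abbreviation \<Delta>\<^sub>S where "\<Delta>\<^sub>S \<equiv> ((p \<otimes> p) \<cdot> \<Delta>) \<cdot> i"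

text \<open>\<open>S\<close> with \<open>\<Delta>\<^sub>S\<close> and \<open>\<upsilon> \<cdot> i\<close> is the coalgebra \<open>C \<box> V\<close>.\<close>
abbreviation lift where
  "lift w \<equiv> coalgebra_morphism M D \<delta>D \<epsilon>D S \<Delta>\<^sub>S (\<upsilon> \<cdot> i) w
    \<and> (\<gamma> \<cdot> i) \<cdot> w = pC \<and> ((\<epsilon> \<otimes> \<one> V) \<cdot> i) \<cdot> w = pV"

lemma lift_types:
  assumes "lift w" shows "arr w" "dom w = D" "cod w = S"
  using assms by (auto simp: coalgebra_morphism_def hom_def)

lemma Gamma_comp_i: "\<Gamma> \<cdot> i = i"
proof -
  have "\<Gamma> \<cdot> i = i \<cdot> (p \<cdot> i)"
    by (simp flip: i_p)
  then show ?thesis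
    by (simp add: p_i)
qed

lemma nu_comp_i: "\<nu> \<cdot> i = (\<epsilon> \<otimes> \<one> V) \<cdot> i"
proof -
  have "\<nu> \<cdot> i = (\<epsilon> \<otimes> \<one> V) \<cdot> (\<Gamma> \<cdot> i)"
    by (simp flip: counit_tensor_Id_Gamma)
  then show ?thesis
    by (simp only: Gamma_comp_i)
qed

lemma tensor_delta_CV_lift:
  assumes w: "lift w"
    and F: "arr F" "dom F = C \<odot> V" "F \<cdot> \<Gamma> = F"
    and G: "arr G" "dom G = C \<odot> V" "G \<cdot> \<Gamma> = G"
  shows "((F \<otimes> G) \<cdot> \<Delta>) \<cdot> (i \<cdot> w) = (((F \<cdot> i) \<cdot> w) \<otimes> ((G \<cdot> i) \<cdot> w)) \<cdot> \<delta>D"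
proof -
  note w_types = lift_types[OF w]
  have "(w \<otimes> w) \<cdot> \<delta>D = \<Delta>\<^sub>S \<cdot> w"
    using w by (simp add: coalgebra_morphism_def)
  then have comult_w: "(p \<otimes> p) \<cdot> (\<Delta> \<cdot> (i \<cdot> w)) = (w \<otimes> w) \<cdot> \<delta>D"
    using w_types by simp
  have "F \<otimes> G = ((F \<cdot> i) \<cdot> p) \<otimes> ((G \<cdot> i) \<cdot> p)"
    using F G by (simp add: i_p)
  also have "\<dots> = ((F \<cdot> i) \<otimes> (G \<cdot> i)) \<cdot> (p \<otimes> p)"
    using F G by (intro interchange) simp_all
  finally have "((F \<otimes> G) \<cdot> \<Delta>) \<cdot> (i \<cdot> w) = ((F \<cdot> i) \<otimes> (G \<cdot> i)) \<cdot> ((w \<otimes> w) \<cdot> \<delta>D)"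
    using F G w_types by (simp add: comult_w)
  also have "\<dots> = (((F \<cdot> i) \<cdot> w) \<otimes> ((G \<cdot> i) \<cdot> w)) \<cdot> \<delta>D"
    using F G w_types by (simp add: interchange)
  finally show ?thesis .
qed

lemma lift_comp_i:
  assumes w: "lift w" shows "i \<cdot> w = pairing"
proof -
  have "i \<cdot> w = ((\<gamma> \<otimes> \<nu>) \<cdot> \<Delta>) \<cdot> (i \<cdot> w)"
    using lift_types[OF w] by (simp add: Gamma_via_delta_CV Gamma_comp_i flip: comp_assoc)
  also have "\<dots> = (pC \<otimes> pV) \<cdot> \<delta>D"
    using w by (simp add: tensor_delta_CV_lift gamma_Gamma nu_Gamma nu_comp_i)
  finally show ?thesis
    by (simp add: pairing_eq)
qed

lemma compatible_if_lift:
  assumes w: "lift w"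
  shows "\<upsilon> \<cdot> pairing = \<epsilon>D" "\<chi> \<cdot> pairing = (pV \<otimes> pC) \<cdot> \<delta>D" "\<tau> \<cdot> pairing = (pV \<otimes> pV) \<cdot> \<delta>D"
proof -
  note w_types = lift_types[OF w]
  have "(\<upsilon> \<cdot> i) \<cdot> w = \<epsilon>D"
    using w by (simp add: coalgebra_morphism_def)
  then show "\<upsilon> \<cdot> pairing = \<epsilon>D"
    using w_types by (simp flip: lift_comp_i[OF w])
  have "\<chi> \<cdot> (i \<cdot> w) = ((\<nu> \<otimes> \<gamma>) \<cdot> \<Delta>) \<cdot> (i \<cdot> w)"
    by (simp only: chi_via_delta_CV)
  also have "\<dots> = (pV \<otimes> pC) \<cdot> \<delta>D"
    using w by (simp add: tensor_delta_CV_lift gamma_Gamma nu_Gamma nu_comp_i)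
  finally show "\<chi> \<cdot> pairing = (pV \<otimes> pC) \<cdot> \<delta>D"
    by (simp only: lift_comp_i[OF w])
  have "\<tau> \<cdot> (i \<cdot> w) = ((\<nu> \<otimes> \<nu>) \<cdot> \<Delta>) \<cdot> (i \<cdot> w)"
    by (simp only: tau_via_delta_CV)
  also have "\<dots> = (pV \<otimes> pV) \<cdot> \<delta>D"
    using w by (simp add: tensor_delta_CV_lift nu_Gamma nu_comp_i)
  finally show "\<tau> \<cdot> pairing = (pV \<otimes> pV) \<cdot> \<delta>D"
    by (simp only: lift_comp_i[OF w])
qed

lemma lift_eq: "lift w \<Longrightarrow> w = p \<cdot> pairing"
proof -
  assume w: "lift w"
  note w_types = lift_types[OF w]
  have "w = (p \<cdot> i) \<cdot> w"
    using w_types by (simp add: p_i)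
  also have "\<dots> = p \<cdot> pairing"
    using w_types by (simp add: lift_comp_i[OF w])
  finally show ?thesis .
qed

lemma lift_if_compatible:
  assumes "\<upsilon> \<cdot> pairing = \<epsilon>D" "\<chi> \<cdot> pairing = (pV \<otimes> pC) \<cdot> \<delta>D" "\<tau> \<cdot> pairing = (pV \<otimes> pV) \<cdot> \<delta>D"
  shows "lift (p \<cdot> pairing)"
proof -
  interpret wcc_compatible_cone M C V \<delta> \<epsilon> \<chi> \<tau> \<upsilon> D \<delta>D \<epsilon>D pC pV
    using assms by unfold_locales
  have i_w: "i \<cdot> (p \<cdot> pairing) = pairing"
    using Gamma_pairing by (simp flip: i_p)
  have "\<Delta>\<^sub>S \<cdot> (p \<cdot> pairing) = (p \<otimes> p) \<cdot> (\<Delta> \<cdot> (i \<cdot> (p \<cdot> pairing)))"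
    by simp
  also have "\<dots> = (p \<otimes> p) \<cdot> ((pairing \<otimes> pairing) \<cdot> \<delta>D)"
    by (simp only: i_w delta_CV_pairing)
  also have "\<dots> = ((p \<cdot> pairing) \<otimes> (p \<cdot> pairing)) \<cdot> \<delta>D"
    by (simp add: interchange)
  finally have "coalgebra_morphism M D \<delta>D \<epsilon>D S \<Delta>\<^sub>S (\<upsilon> \<cdot> i) (p \<cdot> pairing)"
    using i_w upsilon_pairing by (simp add: coalgebra_morphism_def hom_def)
  then show ?thesis
    using i_w gamma_pairing counit_tensor_Id_pairing by simp
qed

lemma unique_lift_iff:
  "(\<exists>w. lift w \<and> (\<forall>w'. lift w' \<longrightarrow> w' = w))
    \<longleftrightarrow> \<upsilon> \<cdot> pairing = \<epsilon>D \<and> \<chi> \<cdot> pairing = (pV \<otimes> pC) \<cdot> \<delta>D \<and> \<tau> \<cdot> pairing = (pV \<otimes> pV) \<cdot> \<delta>D"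
  using compatible_if_lift lift_if_compatible lift_eq by metis

end

theorem theorem1p16:
  fixes M :: "('o, 'm) moncat"
    and C V D CV :: 'o
    and \<delta>C \<epsilon>C \<chi> \<tau> \<upsilon> \<delta>D \<epsilon>D pC pV i p :: 'm
  assumes smc: "strict_monoidal_category M"
    and split: "idempotents_split M"
    and wcc: "weak_crossed_coproduct_precounit M C \<delta>C \<epsilon>C V \<chi> \<tau> \<upsilon>"
    and coalgD: "coalgebra M D \<delta>D \<epsilon>D"
    and pC: "coalgebra_morphism M D \<delta>D \<epsilon>D C \<delta>C \<epsilon>C pC"
    and pV: "hom M pV D V"
    and i: "hom M i CV (Tobj M C V)"
    and p: "hom M p (Tobj M C V) CV"
    and ip: "Comp M i p = Gamma M C \<delta>C \<epsilon>C V \<chi>"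
    and pi: "Comp M p i = Id M CV"
  shows "(\<exists>\<omega>. (coalgebra_morphism M D \<delta>D \<epsilon>D CV
                  (Comp M (Comp M (Tmor M p p) (delta_CV M C \<delta>C V \<chi> \<tau>)) i)
                  (Comp M \<upsilon> i) \<omega>
               \<and> Comp M (Comp M (gamma_ups M C \<delta>C V \<upsilon>) i) \<omega> = pC
               \<and> Comp M (Comp M (Tmor M \<epsilon>C (Id M V)) i) \<omega> = pV)
          \<and> (\<forall>\<omega>'. coalgebra_morphism M D \<delta>D \<epsilon>D CV
                  (Comp M (Comp M (Tmor M p p) (delta_CV M C \<delta>C V \<chi> \<tau>)) i)
                  (Comp M \<upsilon> i) \<omega>'
               \<and> Comp M (Comp M (gamma_ups M C \<delta>C V \<upsilon>) i) \<omega>' = pC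
               \<and> Comp M (Comp M (Tmor M \<epsilon>C (Id M V)) i) \<omega>' = pV
               \<longrightarrow> \<omega>' = \<omega>))
     \<longleftrightarrow>
     (Comp M (Comp M \<upsilon> (Tmor M pC pV)) \<delta>D = \<epsilon>D
      \<and> Comp M (Comp M \<chi> (Tmor M pC pV)) \<delta>D = Comp M (Tmor M pV pC) \<delta>D
      \<and> Comp M (Comp M \<tau> (Tmor M pC pV)) \<delta>D = Comp M (Tmor M pV pV) \<delta>D)"
proof -
  interpret wcc_split_cone M C V \<delta>C \<epsilon>C \<chi> \<tau> \<upsilon> D \<delta>D \<epsilon>D pC pV CV i p
    by unfold_locales (fact assms)+
  show ?thesis
    using unique_lift_iff by (simp add: pairing_eq)
qed

end
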